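(* Let $G=(V,E)$ be a finite, simple, connected graph with $|V|\geq 3$ and let $d\in\mathrm{Der}(\mathcal{A}(G))$ with $d(e_i)=\sum_{k\in V}d_{ik}e_k$. If $d_{ij}\neq 0$ for some $i,j\in V$ with $i\neq j$, then $i\sim_t j$.
   Context: Throughout, $\mathbb{K}$ is a field of characteristic $0$. A graph $G=(V,E)$ has vertex set $V=\{1,\dots,n\}$ and is assumed finite, simple (no loops, no multiple edges) and connected. $\mathcal{N}(i)$ denotes the set of neighbors of vertex $i$, and $(a_{ij})$ is the adjacency matrix ($a_{ij}=1$ if $i,j$ are adjacent, $0$ otherwise). The evolution algebra $\mathcal{A}(G)$ is the $\mathbb{K}$-algebra with basis $\{e_i: i\in V\}$ and product $e_i\cdot e_i=\sum_{k\in V}a_{ik}e_k=\sum_{k\in\mathcal{N}(i)}e_k$ and $e_i\cdot e_j=0$ for $i\neq j$. A derivation of $\mathcal{A}(G)$ is a linear map $d:\mathcal{A}(G)\to\mathcal{A}(G)$ with $d(u\cdot v)=d(u)\cdot v+u\cdot d(v)$ for all $u,v$; $\mathrm{Der}(\mathcal{A}(G))$ is the space of derivations, and for $d$ in it we write $d(e_i)=\sum_{k\in V}d_{ik}e_k$. Two vertices $i,j$ are twins, written $i\sim_t j$, if $\mathcal{N}(i)=\mathcal{N}(j)$. *)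

theory Defs
  imports Main
begin

definition simple_graph :: "'v set \<Rightarrow> ('v \<Rightarrow> 'v \<Rightarrow> bool) \<Rightarrow> bool" where
  "simple_graph V E \<longleftrightarrow> finite V \<and> (\<forall>i j. E i j \<longrightarrow> i \<in> V \<and> j \<in> V)
     \<and> (\<forall>i j. E i j \<longrightarrow> E j i) \<and> (\<forall>i. \<not> E i i)"

definition graph_connected :: "'v set \<Rightarrow> ('v \<Rightarrow> 'v \<Rightarrow> bool) \<Rightarrow> bool" where
  "graph_connected V E \<longleftrightarrow> (\<forall>i\<in>V. \<forall>j\<in>V. (i, j) \<in> {(x, y). E x y}\<^sup>*)"

definition nbhd :: "('v \<Rightarrow> 'v \<Rightarrow> bool) \<Rightarrow> 'v \<Rightarrow> 'v set" where
  "nbhd E i = {k. E i k}"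

definition adj :: "('v \<Rightarrow> 'v \<Rightarrow> bool) \<Rightarrow> 'v \<Rightarrow> 'v \<Rightarrow> 'k::field" where
  "adj E i k = (if E i k then 1 else 0)"

definition twins :: "('v \<Rightarrow> 'v \<Rightarrow> bool) \<Rightarrow> 'v \<Rightarrow> 'v \<Rightarrow> bool" where
  "twins E i j \<longleftrightarrow> nbhd E i = nbhd E j"

text \<open>Elements of the evolution algebra A(G): coordinate functions w.r.t. the basis
  (e_i)_{i in V}, vanishing outside V.\<close>
definition evo_elems :: "'v set \<Rightarrow> ('v \<Rightarrow> 'k::field) set" where
  "evo_elems V = {u. \<forall>x. x \<notin> V \<longrightarrow> u x = 0}"

text \<open>Product: e_i e_i = sum_k a_ik e_k, e_i e_j = 0 for i ~= j, extended bilinearly.\<close>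
definition evo_mult :: "'v set \<Rightarrow> ('v \<Rightarrow> 'v \<Rightarrow> bool) \<Rightarrow> ('v \<Rightarrow> 'k::field) \<Rightarrow> ('v \<Rightarrow> 'k) \<Rightarrow> ('v \<Rightarrow> 'k)" where
  "evo_mult V E u w = (\<lambda>k. if k \<in> V then (\<Sum>i\<in>V. u i * w i * adj E i k) else 0)"

text \<open>The linear map with matrix D, i.e. d(e_i) = sum_k D i k e_k.\<close>
definition lin_of :: "'v set \<Rightarrow> ('v \<Rightarrow> 'v \<Rightarrow> 'k::field) \<Rightarrow> ('v \<Rightarrow> 'k) \<Rightarrow> ('v \<Rightarrow> 'k)" where
  "lin_of V D u = (\<lambda>k. if k \<in> V then (\<Sum>i\<in>V. u i * D i k) else 0)"

definition is_derivation :: "'v set \<Rightarrow> ('v \<Rightarrow> 'v \<Rightarrow> bool) \<Rightarrow> ('v \<Rightarrow> 'v \<Rightarrow> 'k::field) \<Rightarrow> bool" where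
  "is_derivation V E D \<longleftrightarrow> (\<forall>u\<in>evo_elems V. \<forall>w\<in>evo_elems V.
     lin_of V D (evo_mult V E u w)
       = (\<lambda>k. evo_mult V E (lin_of V D u) w k + evo_mult V E u (lin_of V D w) k))"

end

theory Submission
  imports Defs
begin

text \<open>Applying the derivation rule to \<open>e\<^sub>i e\<^sub>j = 0\<close> (\<open>i \<noteq> j\<close>) and reading off the
  coefficient of \<open>e\<^sub>k\<close> gives \<open>d\<^sub>i\<^sub>j a\<^sub>j\<^sub>k + d\<^sub>j\<^sub>i a\<^sub>i\<^sub>k = 0\<close> for every \<open>k\<close>. Taking for \<open>k\<close> a
  neighbour of \<open>j\<close> (it exists by connectedness) forces \<open>a\<^sub>i\<^sub>k = 1\<close> and \<open>d\<^sub>j\<^sub>i = -d\<^sub>i\<^sub>j\<close>;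
  then \<open>d\<^sub>i\<^sub>j (a\<^sub>j\<^sub>k - a\<^sub>i\<^sub>k) = 0\<close> for all \<open>k\<close>, so \<open>i\<close> and \<open>j\<close> have the same neighbours.\<close>

definition evo_basis :: "'v \<Rightarrow> 'v \<Rightarrow> 'k::field" where
  "evo_basis i = (\<lambda>x. if x = i then 1 else 0)"

lemma evo_basis_in_evo_elems: "i \<in> V \<Longrightarrow> evo_basis i \<in> evo_elems V"
  by (simp add: evo_basis_def evo_elems_def)

lemma sum_evo_basis_mult:
  assumes "finite V"
  shows "(\<Sum>x\<in>V. evo_basis i x * f x) = (if i \<in> V then f i else 0)"
proof -
  have "(\<Sum>x\<in>V. evo_basis i x * f x) = (\<Sum>x\<in>V. if x = i then f x else 0)"
    by (rule sum.cong) (simp_all add: evo_basis_def)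
  with assms show ?thesis by simp
qed

lemma lin_of_evo_basis:
  assumes "finite V" and "i \<in> V"
  shows "lin_of V D (evo_basis i) = (\<lambda>k. if k \<in> V then D i k else 0)"
  using assms by (simp add: lin_of_def sum_evo_basis_mult[OF assms(1)] fun_eq_iff)

lemma evo_mult_evo_basis_distinct:
  assumes "i \<noteq> j"
  shows "evo_mult V E (evo_basis i) (evo_basis j) = (\<lambda>k. 0)"
  using assms by (auto simp: evo_mult_def evo_basis_def fun_eq_iff intro!: sum.neutral)

lemma evo_mult_evo_basis_left:
  assumes "finite V" and "i \<in> V" and "k \<in> V"
  shows "evo_mult V E (evo_basis i) w k = w i * adj E i k"
  using assms by (simp add: evo_mult_def mult.assoc sum_evo_basis_mult)

lemma evo_mult_evo_basis_right:
  assumes "finite V" and "j \<in> V" and "k \<in> V"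
  shows "evo_mult V E u (evo_basis j) k = u j * adj E j k"
  using assms by (simp add: evo_mult_def mult.assoc mult.left_commute[of "u _"] sum_evo_basis_mult)

lemma is_derivationD:
  assumes "is_derivation V E D" and "u \<in> evo_elems V" and "w \<in> evo_elems V"
  shows "lin_of V D (evo_mult V E u w) k
    = evo_mult V E (lin_of V D u) w k + evo_mult V E u (lin_of V D w) k"
proof -
  have "lin_of V D (evo_mult V E u w)
      = (\<lambda>k. evo_mult V E (lin_of V D u) w k + evo_mult V E u (lin_of V D w) k)"
    using assms unfolding is_derivation_def by (elim ballE) auto
  then show ?thesis by (rule fun_cong)
qed

lemma derivation_off_diagonal:
  assumes "finite V" and "is_derivation V E D"
    and "i \<in> V" and "j \<in> V" and "i \<noteq> j" and "k \<in> V"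
  shows "D i j * adj E j k + D j i * adj E i k = 0"
proof -
  have "lin_of V D (evo_mult V E (evo_basis i) (evo_basis j)) k = 0"
    using assms(5) by (simp add: evo_mult_evo_basis_distinct lin_of_def)
  with is_derivationD[OF assms(2) evo_basis_in_evo_elems evo_basis_in_evo_elems, OF assms(3,4)]
  show ?thesis
    using assms(1,3,4,6)
    by (simp add: evo_mult_evo_basis_left evo_mult_evo_basis_right lin_of_evo_basis)
qed

lemma connected_has_neighbour:
  assumes "graph_connected V E" and "i \<in> V" and "j \<in> V" and "i \<noteq> j"
  obtains k where "E j k"
proof -
  have "(j, i) \<in> {(x, y). E x y}\<^sup>*"
    using assms(1-3) unfolding graph_connected_def by blast
  then show ?thesis
    using assms(4) by (cases rule: converse_rtranclE) (auto intro: that)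
qed

theorem lemma3p4:
  fixes V :: "'v set" and E :: "'v \<Rightarrow> 'v \<Rightarrow> bool" and D :: "'v \<Rightarrow> 'v \<Rightarrow> 'k::field_char_0"
  assumes "simple_graph V E" and "graph_connected V E" and "card V \<ge> 3"
    and "is_derivation V E D"
    and "i \<in> V" and "j \<in> V" and "i \<noteq> j" and "D i j \<noteq> 0"
  shows "twins E i j"
proof -
  have fin: "finite V" and in_V: "\<And>a b. E a b \<Longrightarrow> a \<in> V \<and> b \<in> V"
    using assms(1) unfolding simple_graph_def by auto
  note off_diag = derivation_off_diagonal[OF fin assms(4-7)]
  obtain y where "E j y"
    using connected_has_neighbour assms(2,5-7) by metis
  with off_diag[of y] in_V have "D i j + D j i * adj E i y = 0"
    by (simp add: adj_def)
  with assms(8) have antisym: "D j i = - D i j"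
    by (auto simp: adj_def add_eq_0_iff split: if_splits)
  have "E i k \<longleftrightarrow> E j k" for k
  proof (cases "k \<in> V")
    case True
    have "D i j * (adj E j k - adj E i k) = 0"
      using off_diag[OF True] antisym by (simp add: algebra_simps)
    with assms(8) have "adj E j k = (adj E i k :: 'k)" by simp
    then show ?thesis by (simp add: adj_def split: if_splits)
  next
    case False
    then show ?thesis using in_V by blast
  qed
  then show ?thesis by (simp add: twins_def nbhd_def)
qed

end
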